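(* Let $N\ge 0$, $k\ge1$ be integers and $f:\{0,\dots,N\}^k\to\{\mathbf{true},\mathbf{false}\}$ a feasibility function, and run $\textsc{ParetoEnumerate}(N,k,f)$ (with arbitrary choices of the picked element in each iteration). For a set $S$ let $D(S)=\{\vec z\in\{0,\dots,N\}^k : \vec z\le_k \vec y \text{ for some } \vec y\in S\}$. In every iteration of the main loop, if $S$ denotes the set before and $S^{\mathrm{new}}$ the set after the iteration, then $D(S^{\mathrm{new}})\subseteq D(S)$ and $D(S^{\mathrm{new}})\neq D(S)$, i.e., $D(S)$ shrinks by at least one point per iteration.
   Context: For $\vec x,\vec x'\in\{0,\dots,N\}^k$, $\vec x\le_k\vec x'$ iff $x_i\le x'_i$ for all $i$; $\vec x$ is smaller than $\vec x'$ (and $\vec x'$ greater than $\vec x$) if $\vec x\le_k\vec x'$ and $\vec x\neq\vec x'$. A feasibility function is a monotone $f:\{0,\dots,N\}^k\to\{\mathbf{true},\mathbf{false}\}$: if $f(\vec x)=\mathbf{true}$ then $f(\vec x')=\mathbf{true}$ for all $\vec x'$ greater than $\vec x$. A Pareto point of $f$ is an $\vec x$ with $f(\vec x)=\mathbf{true}$ and $f(\vec x')=\mathbf{false}$ for all $\vec x'$ smaller than $\vec x$. Procedure $\textsc{SearchParetoPoint}(\vec x,k,f)$: for $i=1,\dots,k$: set $\mathit{max}:=x_i+1$, $\mathit{min}:=0$; while $\mathit{max}-\mathit{min}>1$: $\mathit{mid}:=\mathit{min}+\lfloor(\mathit{max}-\mathit{min}-1)/2\rfloor$, $x_i:=\mathit{mid}$,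 and if $f(\vec x)=\mathbf{true}$ then $\mathit{max}:=\mathit{mid}+1$ else $\mathit{min}:=\mathit{mid}+1$; then $x_i:=\mathit{min}$. Return $\vec x$. Procedure $\textsc{ParetoEnumerate}(N,k,f)$: initialize $S:=\{(N,\dots,N)\}$ and $P:=\emptyset$. Main loop: while $S\neq\emptyset$: pick (without removing) some $\vec x\in S$; if $f(\vec x)=\mathbf{true}$, then set $\vec x:=\textsc{SearchParetoPoint}(\vec x,k,f)$, set $P:=P\cup\{\vec x\}$, set $S':=\emptyset$, and for each $\vec y\in S$: if not $\vec x\le_k\vec y$, add $\vec y$ to $S'$; otherwise, for each $i\in\{1,\dots,k\}$ with $x_i>0$, add $(y_1,\dots,y_{i-1},x_i-1,y_{i+1},\dots,y_k)$ to $S'$; then set $S$ to the set of elements of $S'$ that are not smaller than any other element of $S'$. Otherwise (if $f(\vec x)=\mathbf{false}$), set $S:=S\setminus\{\vec x\}$. When the loop ends, return $P$. *)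

theory Defs
  imports Main
begin

text \<open>Vectors in {0..N}^k are represented as lists of naturals of length k with all
  entries at most N; coordinate i of the paper (1-based) is list index i-1.\<close>

definition grid :: "nat \<Rightarrow> nat \<Rightarrow> nat list set" where
  "grid N k = {x. length x = k \<and> (\<forall>i<k. x ! i \<le> N)}"

definition vle :: "nat list \<Rightarrow> nat list \<Rightarrow> bool" where
  "vle x y \<longleftrightarrow> length x = length y \<and> (\<forall>i<length x. x ! i \<le> y ! i)"

definition smaller :: "nat list \<Rightarrow> nat list \<Rightarrow> bool" where
  "smaller x y \<longleftrightarrow> vle x y \<and> x \<noteq> y"

definition feasibility :: "nat \<Rightarrow> nat \<Rightarrow> (nat list \<Rightarrow> bool) \<Rightarrow> bool" where
  "feasibility N k f \<longleftrightarrow>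
     (\<forall>x\<in>grid N k. \<forall>x'\<in>grid N k. f x \<longrightarrow> smaller x x' \<longrightarrow> f x')"

function bsearch :: "(nat list \<Rightarrow> bool) \<Rightarrow> nat list \<Rightarrow> nat \<Rightarrow> nat \<Rightarrow> nat \<Rightarrow> nat" where
  "bsearch f x i mn mx =
     (if mx - mn > 1 then
        (let mid = mn + (mx - mn - 1) div 2 in
          if f (x[i := mid]) then bsearch f x i mn (mid + 1)
          else bsearch f x i (mid + 1) mx)
      else mn)"
  by pat_completeness auto
termination
  by (relation "measure (\<lambda>(f, x, i, mn, mx). mx - mn)") (auto simp: Let_def)

definition search_pareto_point :: "nat list \<Rightarrow> nat \<Rightarrow> (nat list \<Rightarrow> bool) \<Rightarrow> nat list" where
  "search_pareto_point x k f =
     foldl (\<lambda>v i. v[i := bsearch f v i 0 (v ! i + 1)]) x [0..<k]"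

definition update_S :: "nat \<Rightarrow> nat list \<Rightarrow> nat list set \<Rightarrow> nat list set" where
  "update_S k x S =
     (let S' = {y\<in>S. \<not> vle x y} \<union>
               {y[i := x ! i - 1] | y i. y \<in> S \<and> vle x y \<and> i < k \<and> x ! i > 0}
      in {y\<in>S'. \<not> (\<exists>z\<in>S'. smaller y z)})"

text \<open>One iteration of the main loop of ParetoEnumerate (nondeterministic choice of x).\<close>
inductive pe_step :: "nat \<Rightarrow> (nat list \<Rightarrow> bool) \<Rightarrow>
    nat list set \<times> nat list set \<Rightarrow> nat list set \<times> nat list set \<Rightarrow> bool"
  for k f where
  feasible: "\<lbrakk>x \<in> S; f x; x' = search_pareto_point x k f\<rbrakk>
     \<Longrightarrow> pe_step k f (S, P) (update_S k x' S, P \<union> {x'})"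
| infeasible: "\<lbrakk>x \<in> S; \<not> f x\<rbrakk> \<Longrightarrow> pe_step k f (S, P) (S - {x}, P)"

definition pe_init :: "nat \<Rightarrow> nat \<Rightarrow> nat list set \<times> nat list set" where
  "pe_init N k = ({replicate k N}, {})"

definition down :: "nat \<Rightarrow> nat \<Rightarrow> nat list set \<Rightarrow> nat list set" where
  "down N k S = {z\<in>grid N k. \<exists>y\<in>S. vle z y}"

end

theory Submission
  imports Defs
begin

text \<open>Every element of the updated set lies below an old element (a modified \<open>y\<close> only
  lowers one coordinate of \<open>y\<close>), so \<open>D(S)\<close> never grows. It shrinks because some point leaves
  it: in a feasible step the found point \<open>x'\<close> lies below the picked element, but every element
  of the updated set is either kept for not dominating \<open>x'\<close> or has its \<open>i\<close>-th coordinate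
  lowered to \<open>x'\<^sub>i - 1\<close>; in an infeasible step the picked element itself leaves, since the
  set is an antichain.\<close>

declare bsearch.simps [simp del]

lemma vle_refl [simp]: "vle x x"
  unfolding vle_def by simp

lemma vle_trans: "vle x y \<Longrightarrow> vle y z \<Longrightarrow> vle x z"
  unfolding vle_def by (metis order_trans)

lemma vle_list_update: "i < length x \<Longrightarrow> a \<le> x ! i \<Longrightarrow> vle (x[i := a]) x"
  unfolding vle_def by (simp add: nth_list_update)

lemma vle_grid: "vle x y \<Longrightarrow> y \<in> grid N k \<Longrightarrow> x \<in> grid N k"
  unfolding vle_def grid_def by (auto intro: le_trans)

lemma bsearch_less: "mn < mx \<Longrightarrow> bsearch f x i mn mx < mx"
  by (induction f x i mn mx rule: bsearch.induct) (subst bsearch.simps; auto simp: Let_def)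

lemma search_pareto_point_vle:
  assumes "length x = k"
  shows "vle (search_pareto_point x k f) x"
proof -
  have "vle (foldl (\<lambda>v i. v[i := bsearch f v i 0 (v ! i + 1)]) v is) v"
    if "\<forall>i\<in>set is. i < length v" for v "is"
    using that
  proof (induction "is" arbitrary: v)
    case (Cons i "is")
    let ?w = "v[i := bsearch f v i 0 (v ! i + 1)]"
    have "vle ?w v"
      using Cons.prems bsearch_less[of 0 "v ! i + 1" f v i] by (intro vle_list_update) auto
    moreover have "vle (foldl (\<lambda>v i. v[i := bsearch f v i 0 (v ! i + 1)]) ?w is) ?w"
      using Cons by simp
    ultimately show ?case by (simp add: vle_trans)
  qed simp
  with assms show ?thesis
    unfolding search_pareto_point_def by simp
qed

lemma update_S_cases:
  assumes "w \<in> update_S k x S"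
  obtains "w \<in> S" "\<not> vle x w"
    | y i where "w = y[i := x ! i - 1]" "y \<in> S" "vle x y" "i < k" "0 < x ! i"
  using assms unfolding update_S_def Let_def by auto

lemma update_S_antichain: "a \<in> update_S k x S \<Longrightarrow> b \<in> update_S k x S \<Longrightarrow> \<not> smaller a b"
  unfolding update_S_def Let_def by auto

lemma update_S_dominated:
  assumes "length x = k" "w \<in> update_S k x S"
  shows "\<exists>y\<in>S. vle w y"
  using assms(2)
proof (cases rule: update_S_cases)
  case (2 y i)
  then have "vle w y"
    using assms(1) unfolding vle_def by (auto simp: nth_list_update intro: le_trans)
  with 2 show ?thesis by blast
qed (blast intro: vle_refl)

lemma update_S_not_above:
  assumes "length x = k" "w \<in> update_S k x S"
  shows "\<not> vle x w"
  using assms(2)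
proof (cases rule: update_S_cases)
  case (2 y i)
  then have "w ! i = x ! i - 1"
    using assms(1) unfolding vle_def by simp
  with 2 assms(1) show ?thesis
    unfolding vle_def by force
qed

definition grid_antichain :: "nat \<Rightarrow> nat \<Rightarrow> nat list set \<Rightarrow> bool" where
  "grid_antichain N k S \<longleftrightarrow> S \<subseteq> grid N k \<and> (\<forall>a\<in>S. \<forall>b\<in>S. \<not> smaller a b)"

lemma search_pareto_point_grid:
  assumes "x \<in> grid N k"
  shows "search_pareto_point x k f \<in> grid N k"
proof -
  have "length x = k"
    using assms by (simp add: grid_def)
  from vle_grid[OF search_pareto_point_vle[OF this] assms] show ?thesis .
qed

lemma grid_antichain_update_S:
  assumes "grid_antichain N k S" "length x = k"
  shows "grid_antichain N k (update_S k x S)"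
  unfolding grid_antichain_def
proof (intro conjI subsetI ballI)
  fix w
  assume "w \<in> update_S k x S"
  then obtain y where "y \<in> S" "vle w y"
    using update_S_dominated[OF assms(2)] by blast
  with assms(1) show "w \<in> grid N k"
    unfolding grid_antichain_def by (blast intro: vle_grid)
qed (rule update_S_antichain)

lemma pe_step_grid_antichain:
  assumes "pe_step k f (S, P) (S', P')" "grid_antichain N k S"
  shows "grid_antichain N k S'"
  using assms(1)
proof cases
  case (feasible x)
  then have "search_pareto_point x k f \<in> grid N k"
    using assms(2) search_pareto_point_grid unfolding grid_antichain_def by blast
  with feasible assms(2) show ?thesis
    using grid_antichain_update_S unfolding grid_def by simp
qed (use assms(2) in \<open>auto simp: grid_antichain_def\<close>)

lemma reachable_grid_antichain:
  assumes "(pe_step k f)\<^sup>*\<^sup>* (pe_init N k) (S, P)"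
  shows "grid_antichain N k S"
proof -
  have "grid_antichain N k (fst s)" if "(pe_step k f)\<^sup>*\<^sup>* (pe_init N k) s" for s
    using that
  proof (induction rule: rtranclp_induct)
    case base
    show ?case
      unfolding pe_init_def grid_antichain_def grid_def smaller_def by auto
  next
    case (step s t)
    then show ?case
      using pe_step_grid_antichain[of k f "fst s" "snd s" "fst t" "snd t"] by simp
  qed
  with assms show ?thesis by force
qed

lemma down_strict_subset:
  assumes "\<forall>w\<in>S'. \<exists>y\<in>S. vle w y" "z \<in> down N k S" "\<forall>w\<in>S'. \<not> vle z w"
  shows "down N k S' \<subset> down N k S"
  using assms vle_trans unfolding down_def by blast

lemma pe_step_down_strict_subset:
  assumes "pe_step k f (S, P) (S', P')" "grid_antichain N k S"
  shows "down N k S' \<subset> down N k S"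
  using assms(1)
proof cases
  case (feasible x)
  define x' where "x' = search_pareto_point x k f"
  have "x \<in> grid N k"
    using feasible assms(2) unfolding grid_antichain_def by blast
  then have "length x = k" "x' \<in> grid N k" "vle x' x"
    using search_pareto_point_grid search_pareto_point_vle unfolding grid_def x'_def by auto
  then have "length x' = k" "x' \<in> down N k S"
    using feasible unfolding grid_def down_def by auto
  then show ?thesis
    using feasible update_S_dominated update_S_not_above unfolding x'_def[symmetric]
    by (intro down_strict_subset) auto
next
  case (infeasible x)
  then have "x \<in> down N k S"
    using assms(2) unfolding grid_antichain_def down_def by (blast intro: vle_refl)
  moreover have "\<forall>w\<in>S'. \<not> vle x w"
    using infeasible assms(2) unfolding grid_antichain_def smaller_def by blast
  moreover have "\<forall>w\<in>S'. \<exists>y\<in>S. vle w y"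
    using infeasible by (blast intro: vle_refl)
  ultimately show ?thesis
    by (rule down_strict_subset[rotated])
qed

theorem lemma3:
  fixes N k :: nat and f :: "nat list \<Rightarrow> bool"
    and S P S' P' :: "nat list set"
  assumes "k \<ge> 1"
    and "feasibility N k f"
    and "(pe_step k f)\<^sup>*\<^sup>* (pe_init N k) (S, P)"
    and "pe_step k f (S, P) (S', P')"
  shows "down N k S' \<subseteq> down N k S \<and> down N k S' \<noteq> down N k S"
  using pe_step_down_strict_subset[OF assms(4) reachable_grid_antichain[OF assms(3)]] by blast

end
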